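(* Let $w\in\mathcal C_b(E)$ and $\lambda\in\mathbb R$ satisfy the Bellman equation \[ w(x)=\sup_{\tau\in\mathcal T_{x,b}}\ln\mathbb E_x\Big[\exp\Big(\int_0^\tau (f(X_s)-\lambda)\,ds+Mw(X_\tau)\Big)\Big],\qquad x\in E. \] Then $\lambda\ge r(f)$.
   Context: $X=(X_t)_{t\ge0}$ is a standard Feller–Markov process on a filtered probability space, with values in a locally compact separable metric space $(E,\rho)$ with Borel $\sigma$-field $\mathcal E$; $\mathbb P_x,\mathbb E_x$ denote the law/expectation of $X$ started at $x$. $\mathcal C_b(E)$ is the space of bounded continuous real functions on $E$ with sup norm $\|\cdot\|$. $\mathcal T_{x,b}$ is the family of stopping times that are $\mathbb P_x$-a.s. bounded. $U\subseteq E$ is a fixed compact set. $f:E\to(-\infty,0]$ is continuous and bounded; $c:E\times U\to(-\infty,0]$ is continuous and bounded. The operator $M$ is $Mh(x):=\sup_{\xi\in U}(c(x,\xi)+h(\xi))$ for $h\in\mathcal C_b(E)$, $x\in E$. For bounded continuous $g$, $r(g):=\lim_{t\to\infty}\frac1t\ln\sup_{x\in E}\mathbb E_x\big[e^{\int_0^t g(X_s)ds}\big]$ (the limit exists). *)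

theory Defs
  imports "HOL-Probability.Probability"
begin

text \<open>Standard Feller--Markov process with state space 'e (Borel sigma-field),
  sample space the measurable space A, filtration F (indexed by real time),
  laws P x (started at x) and paths X t.\<close>

definition feller_markov ::
  "'w measure \<Rightarrow> (real \<Rightarrow> 'w measure) \<Rightarrow> ('e::{metric_space,second_countable_topology} \<Rightarrow> 'w measure)
    \<Rightarrow> (real \<Rightarrow> 'w \<Rightarrow> 'e) \<Rightarrow> bool" where
  "feller_markov A F P X \<longleftrightarrow>
     (\<forall>x. prob_space (P x) \<and> sets (P x) = sets A) \<and>
     filtration (space A) F \<and> (\<forall>t. sets (F t) \<subseteq> sets A) \<and>
     (\<forall>t\<ge>0. X t \<in> F t \<rightarrow>\<^sub>M borel) \<and>
     (\<forall>x. AE \<omega> in P x. X 0 \<omega> = x) \<and>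
     (\<forall>\<omega>\<in>space A. \<forall>t\<ge>0. continuous (at_right t) (\<lambda>s. X s \<omega>)) \<and>
     (\<forall>\<omega>\<in>space A. \<forall>t>0. \<exists>l. ((\<lambda>s. X s \<omega>) \<longlongrightarrow> l) (at_left t)) \<and>
     (\<forall>B\<in>sets A. (\<lambda>x. emeasure (P x) B) \<in> borel_measurable borel) \<and>
     (\<forall>t\<ge>0. \<forall>h::'e \<Rightarrow> real. continuous_on UNIV h \<and> bounded (range h) \<longrightarrow>
        continuous_on UNIV (\<lambda>x. \<integral>\<omega>. h (X t \<omega>) \<partial>P x)) \<and>
     (\<forall>x \<tau> s (h::'e \<Rightarrow> real). stopping_time F \<tau> \<and> (\<forall>\<omega>\<in>space A. 0 \<le> \<tau> \<omega>) \<and> 0 \<le> s \<and>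
        h \<in> borel_measurable borel \<and> bounded (range h) \<longrightarrow>
        (AE \<omega> in P x. real_cond_exp (P x) (filtration.pre_sigma (space A) F \<tau>)
                          (\<lambda>\<omega>. h (X (\<tau> \<omega> + s) \<omega>)) \<omega>
                       = (\<integral>\<omega>'. h (X s \<omega>') \<partial>P (X (\<tau> \<omega>) \<omega>)))) \<and>
     (\<forall>x (\<tau>n::nat \<Rightarrow> 'w \<Rightarrow> real) \<tau>.
        (\<forall>n. stopping_time F (\<tau>n n)) \<and> stopping_time F \<tau> \<and>
        (\<forall>\<omega>\<in>space A. \<forall>n. 0 \<le> \<tau>n n \<omega>) \<and>
        (\<forall>\<omega>\<in>space A. incseq (\<lambda>n. \<tau>n n \<omega>) \<and> (\<lambda>n. \<tau>n n \<omega>) \<longlonglongrightarrow> \<tau> \<omega>) \<longrightarrow>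
        (AE \<omega> in P x. (\<lambda>n. X (\<tau>n n \<omega>) \<omega>) \<longlonglongrightarrow> X (\<tau> \<omega>) \<omega>))"

definition bdd_stopping_times ::
  "'w measure \<Rightarrow> (real \<Rightarrow> 'w measure) \<Rightarrow> 'w measure \<Rightarrow> ('w \<Rightarrow> real) set" where
  "bdd_stopping_times A F Px =
     {\<tau>. stopping_time F \<tau> \<and> (\<forall>\<omega>\<in>space A. 0 \<le> \<tau> \<omega>) \<and> (\<exists>C. AE \<omega> in Px. \<tau> \<omega> \<le> C)}"

definition Mop :: "('e \<Rightarrow> 'e \<Rightarrow> real) \<Rightarrow> 'e set \<Rightarrow> ('e \<Rightarrow> real) \<Rightarrow> 'e \<Rightarrow> real" where
  "Mop c U h x = (SUP \<xi>\<in>U. c x \<xi> + h \<xi>)"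

definition growth_quot :: "('e \<Rightarrow> 'w measure) \<Rightarrow> (real \<Rightarrow> 'w \<Rightarrow> 'e) \<Rightarrow> ('e \<Rightarrow> real) \<Rightarrow> real \<Rightarrow> real" where
  "growth_quot P X g t =
     ln (SUP x. \<integral>\<omega>. exp (LINT s:{0..t}|lborel. g (X s \<omega>)) \<partial>P x) / t"

definition rate :: "('e \<Rightarrow> 'w measure) \<Rightarrow> (real \<Rightarrow> 'w \<Rightarrow> 'e) \<Rightarrow> ('e \<Rightarrow> real) \<Rightarrow> real" where
  "rate P X g = Lim at_top (growth_quot P X g)"

end

theory Submission
  imports Defs
begin

text \<open>Stopping at the deterministic time \<open>t\<close> in the Bellman equation gives
  \<open>E\<^sub>x[exp(\<integral>\<^sub>0\<^sup>t (f(X\<^sub>s) - \<lambda>) ds + Mw(X\<^sub>t))] \<le> exp(w x)\<close>. Since \<open>w\<close> is bounded and \<open>Mw\<close> is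
  bounded below, this yields \<open>sup\<^sub>x E\<^sub>x[exp(\<integral>\<^sub>0\<^sup>t f(X\<^sub>s) ds)] \<le> exp(\<lambda> t + D)\<close> for a constant
  \<open>D\<close> independent of \<open>t\<close>, hence \<open>r(f) \<le> \<lambda>\<close> after taking logarithms, dividing by \<open>t\<close> and
  letting \<open>t \<rightarrow> \<infinity>\<close>.\<close>

lemma feller_markov_measurable:
  assumes "feller_markov A F P X" "t \<ge> 0"
  shows "X t \<in> borel_measurable A"
proof -
  have fil: "filtration (space A) F" and sub: "sets (F t) \<subseteq> sets A"
    and m: "X t \<in> F t \<rightarrow>\<^sub>M borel"
    using assms unfolding feller_markov_def by auto
  have "subalgebra A (F t)"
    using sub filtration.space_F[OF fil] by (simp add: subalgebra_def)
  then show ?thesis using m measurable_from_subalg by blast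
qed

lemma continuous_at_right_sequentially:
  fixes g :: "real \<Rightarrow> 'e::metric_space"
  assumes "continuous (at_right u) g" "\<And>n. u \<le> d n" "d \<longlonglongrightarrow> u"
  shows "(\<lambda>n. g (d n)) \<longlonglongrightarrow> g u"
proof -
  have "at u within {u..} = at_right u"
  proof -
    have "{u..} - {u} = {u<..} - {u}" by auto
    then show ?thesis unfolding at_within_def by simp
  qed
  then have "continuous (at u within {u..}) g" using assms(1) by simp
  then show ?thesis using assms(2,3) unfolding continuous_within_sequentially comp_def by auto
qed

lemma grid_ceiling_tendsto:
  fixes u :: real
  assumes "0 \<le> u"
  shows "u \<le> real (nat \<lceil>real (Suc n) * u\<rceil>) / real (Suc n)"
    and "(\<lambda>n. real (nat \<lceil>real (Suc n) * u\<rceil>) / real (Suc n)) \<longlonglongrightarrow> u"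
proof -
  define d where "d n = real (nat \<lceil>real (Suc n) * u\<rceil>) / real (Suc n)" for n
  have ge: "u \<le> d n" for n
    using real_nat_ceiling_ge[of "real (Suc n) * u"] unfolding d_def by (simp add: field_simps)
  have le: "d n \<le> u + 1 / real (Suc n)" for n
  proof -
    have "real (nat \<lceil>real (Suc n) * u\<rceil>) \<le> real (Suc n) * u + 1"
      using assms by (simp add: of_nat_nat)
    then have "d n \<le> (real (Suc n) * u + 1) / real (Suc n)"
      unfolding d_def by (intro divide_right_mono) auto
    then show ?thesis by (simp add: field_simps)
  qed
  have "d \<longlonglongrightarrow> u"
  proof (rule tendsto_sandwich[of "\<lambda>n. u" _ _ "\<lambda>n. u + 1 / real (Suc n)"])
    show "(\<lambda>n. u + 1 / real (Suc n)) \<longlonglongrightarrow> u"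
      using tendsto_add[OF tendsto_const LIMSEQ_inverse_real_of_nat] by (simp add: inverse_eq_divide)
  qed (use ge le in simp_all)
  then show "(\<lambda>n. real (nat \<lceil>real (Suc n) * u\<rceil>) / real (Suc n)) \<longlonglongrightarrow> u"
    unfolding d_def .
  show "u \<le> real (nat \<lceil>real (Suc n) * u\<rceil>) / real (Suc n)" using ge unfolding d_def .
qed

text \<open>Paths are extended to negative times by their value at \<open>0\<close>, so that the process becomes a
  function on \<open>A \<Otimes>\<^sub>M lborel\<close>. Right-continuity lets us approximate the time \<open>s\<close> from above by
  the grid points \<open>\<lceil>(n+1) s\<rceil> / (n+1)\<close>.\<close>

lemma right_continuous_process_measurable:
  fixes X :: "real \<Rightarrow> 'w \<Rightarrow> 'e::metric_space"
  assumes meas: "\<And>t. t \<ge> 0 \<Longrightarrow> X t \<in> borel_measurable A"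
    and cont: "\<And>\<omega> t. \<omega> \<in> space A \<Longrightarrow> t \<ge> 0 \<Longrightarrow> continuous (at_right t) (\<lambda>s. X s \<omega>)"
  shows "(\<lambda>(\<omega>, s). X (max s 0) \<omega>) \<in> borel_measurable (A \<Otimes>\<^sub>M lborel)"
proof (rule borel_measurable_LIMSEQ_metric)
  fix n :: nat
  have "(\<lambda>p. X (real k / real (Suc n)) (fst p)) \<in> borel_measurable (A \<Otimes>\<^sub>M lborel)" for k
    using meas[of "real k / real (Suc n)"] by measurable
  moreover have "(\<lambda>p. nat \<lceil>real (Suc n) * max (snd p) 0\<rceil>) \<in> A \<Otimes>\<^sub>M lborel \<rightarrow>\<^sub>M count_space UNIV"
    by measurable
  ultimately show "(\<lambda>p. X (real (nat \<lceil>real (Suc n) * max (snd p) 0\<rceil>) / real (Suc n)) (fst p))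
      \<in> borel_measurable (A \<Otimes>\<^sub>M lborel)"
    by (rule measurable_compose_countable[where f="\<lambda>k p. X (real k / real (Suc n)) (fst p)"])
next
  fix p :: "_ \<times> real"
  assume "p \<in> space (A \<Otimes>\<^sub>M lborel)"
  then obtain \<omega> s where p: "p = (\<omega>, s)" "\<omega> \<in> space A" by (auto simp: space_pair_measure)
  have u: "0 \<le> max s 0" by simp
  show "(\<lambda>n. X (real (nat \<lceil>real (Suc n) * max (snd p) 0\<rceil>) / real (Suc n)) (fst p))
      \<longlonglongrightarrow> (case p of (\<omega>, s) \<Rightarrow> X (max s 0) \<omega>)"
    using continuous_at_right_sequentially[OF cont[OF p(2) u] grid_ceiling_tendsto[OF u]]
    unfolding p by simp
qed

lemma time_integral_measurable:
  fixes X :: "real \<Rightarrow> 'w \<Rightarrow> 'e::metric_space" and g :: "'e \<Rightarrow> real"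
  assumes joint: "(\<lambda>(\<omega>, s). X (max s 0) \<omega>) \<in> borel_measurable (A \<Otimes>\<^sub>M lborel)"
    and g: "g \<in> borel_measurable borel"
  shows "(\<lambda>\<omega>. LINT s:{0..t}|lborel. g (X s \<omega>)) \<in> borel_measurable A"
proof -
  have "(\<lambda>(\<omega>, s). indicator {0..t} s *\<^sub>R g (X (max s 0) \<omega>)) \<in> borel_measurable (A \<Otimes>\<^sub>M lborel)"
  proof -
    have "(\<lambda>p. indicator {0..t} (snd p) :: real) \<in> borel_measurable (A \<Otimes>\<^sub>M lborel)"
      by (intro measurable_compose[OF measurable_snd] borel_measurable_indicator) simp
    then show ?thesis
      using measurable_compose[OF joint g] by (simp add: split_beta' borel_measurable_times)
  qed
  then have "(\<lambda>\<omega>. LINT s:{0..t}|lborel. g (X (max s 0) \<omega>)) \<in> borel_measurable A"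
    unfolding set_lebesgue_integral_def by (rule lborel.borel_measurable_lebesgue_integral)
  moreover have "(LINT s:{0..t}|lborel. g (X (max s 0) \<omega>)) = (LINT s:{0..t}|lborel. g (X s \<omega>))" for \<omega>
    by (rule set_lebesgue_integral_cong) auto
  ultimately show ?thesis by simp
qed

lemma path_set_integrable:
  fixes X :: "real \<Rightarrow> 'w \<Rightarrow> 'e::metric_space" and g :: "'e \<Rightarrow> real"
  assumes joint: "(\<lambda>(\<omega>, s). X (max s 0) \<omega>) \<in> borel_measurable (A \<Otimes>\<^sub>M lborel)"
    and g: "g \<in> borel_measurable borel" "bounded (range g)" and \<omega>: "\<omega> \<in> space A"
  shows "set_integrable lborel {0..t} (\<lambda>s. g (X s \<omega>))"
proof -
  obtain B where B: "\<And>y. norm (g y) \<le> B" using g(2) unfolding bounded_iff by auto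
  have m: "(\<lambda>s. g (X (max s 0) \<omega>)) \<in> borel_measurable borel"
    using measurable_compose[OF measurable_Pair2[OF joint \<omega>] g(1)] by simp
  have "set_integrable lborel {0..t} (\<lambda>s. g (X (max s 0) \<omega>))"
    unfolding set_integrable_def
    by (rule integrableI_bounded_set_indicator[where B=B]) (use m B in \<open>auto intro!: AE_I2 simp: emeasure_lborel_Icc_eq\<close>)
  then show ?thesis by (rule set_integrable_cong[THEN iffD1, rotated -1]) auto
qed

text \<open>\<open>Mop c U w\<close> is lower semicontinuous, being a supremum of continuous functions.\<close>

lemma Mop_measurable:
  assumes c: "continuous_on (UNIV \<times> U) (\<lambda>(x, \<xi>). c x \<xi>)" and U: "U \<noteq> {}"
    and w: "continuous_on UNIV w"
    and bdd: "\<And>x. bdd_above ((\<lambda>\<xi>. c x \<xi> + w \<xi>) ` U)"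
  shows "Mop c U w \<in> borel_measurable borel"
proof (subst borel_measurable_iff_greater, intro allI)
  fix a :: real
  have "{x \<in> space borel. a < Mop c U w x} = (\<Union>\<xi>\<in>U. {x. a < c x \<xi> + w \<xi>})"
    unfolding Mop_def by (auto simp: less_cSUP_iff[OF U bdd])
  moreover have "open {x. a < c x \<xi> + w \<xi>}" if "\<xi> \<in> U" for \<xi>
  proof -
    have "continuous_on UNIV (\<lambda>x. (\<lambda>(x, \<xi>). c x \<xi>) (x, \<xi>))"
      by (rule continuous_on_compose2[OF c continuous_on_Pair[OF continuous_on_id continuous_on_const]])
        (auto simp: that)
    then show ?thesis
      by (intro open_Collect_less continuous_on_add continuous_on_const) simp_all
  qed
  then have "open (\<Union>\<xi>\<in>U. {x. a < c x \<xi> + w \<xi>})" by blast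
  ultimately show "{x \<in> space borel. a < Mop c U w x} \<in> sets borel" by simp
qed

lemma (in prob_space) integral_pos:
  fixes h :: "_ \<Rightarrow> real"
  assumes "integrable M h" "\<And>\<omega>. \<omega> \<in> space M \<Longrightarrow> 0 < h \<omega>"
  shows "0 < integral\<^sup>L M h"
proof -
  have nonneg: "AE \<omega> in M. 0 \<le> h \<omega>" using assms(2) by (intro AE_I2) (metis less_imp_le)
  have "integral\<^sup>L M h \<noteq> 0"
  proof
    assume "integral\<^sup>L M h = 0"
    then have "AE \<omega> in M. h \<omega> = 0" using integral_nonneg_eq_0_iff_AE[OF assms(1) nonneg] by simp
    then have "AE \<omega> in M. False" by (rule AE_mp) (use assms(2) in \<open>force intro!: AE_I2\<close>)
    then show False by simp
  qed
  then show ?thesis using integral_nonneg_AE[OF nonneg] by linarith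
qed

lemma (in prob_space) integrable_exp_bounded_above:
  fixes Y :: "_ \<Rightarrow> real"
  assumes "Y \<in> borel_measurable M" "\<And>\<omega>. \<omega> \<in> space M \<Longrightarrow> Y \<omega> \<le> B"
  shows "integrable M (\<lambda>\<omega>. exp (Y \<omega>))"
  by (rule integrable_const_bound[where B="exp B"]) (use assms in \<open>auto intro!: AE_I2\<close>)

lemma (in prob_space) integral_exp_le:
  fixes Y Z :: "_ \<Rightarrow> real"
  assumes Y: "Y \<in> borel_measurable M" "\<And>\<omega>. \<omega> \<in> space M \<Longrightarrow> Y \<omega> \<le> Z \<omega> + C"
    and Z: "Z \<in> borel_measurable M" "\<And>\<omega>. \<omega> \<in> space M \<Longrightarrow> Z \<omega> \<le> B"
    and ln_le: "ln (\<integral>\<omega>. exp (Z \<omega>) \<partial>M) \<le> a"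
  shows "(\<integral>\<omega>. exp (Y \<omega>) \<partial>M) \<le> exp (C + a)"
proof -
  have intZ: "integrable M (\<lambda>\<omega>. exp (Z \<omega>))" by (rule integrable_exp_bounded_above[OF Z])
  have intY: "integrable M (\<lambda>\<omega>. exp (Y \<omega>))"
    using Y(2) Z(2) by (intro integrable_exp_bounded_above[OF Y(1), where B="B + C"]) fastforce
  have "(\<integral>\<omega>. exp (Y \<omega>) \<partial>M) \<le> (\<integral>\<omega>. exp C * exp (Z \<omega>) \<partial>M)"
    using Y(2) by (intro integral_mono intY integrable_mult_right intZ) (simp add: exp_add[symmetric] add.commute)
  also have "\<dots> = exp C * (\<integral>\<omega>. exp (Z \<omega>) \<partial>M)" by simp
  also have "(\<integral>\<omega>. exp (Z \<omega>) \<partial>M) \<le> exp a"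
    using ln_le integral_pos[OF intZ] by (metis exp_gt_zero exp_le_cancel_iff exp_ln)
  finally show ?thesis by (simp add: exp_add)
qed

lemma expectation_exp_time_integral_le:
  fixes X :: "real \<Rightarrow> 'w \<Rightarrow> 'e::{metric_space,second_countable_topology}" and f m :: "'e \<Rightarrow> real"
  assumes proc: "feller_markov A F P X"
    and f: "f \<in> borel_measurable borel" "bounded (range f)" "\<And>y. f y \<le> 0"
    and m: "m \<in> borel_measurable borel" "\<And>y. m y \<le> B" "\<And>y. - K \<le> m y"
    and t: "0 < t"
    and value_le: "ln (\<integral>\<omega>. exp ((LINT s:{0..t}|lborel. f (X s \<omega>) - lam) + m (X t \<omega>)) \<partial>P x) \<le> a"
  shows "0 < (\<integral>\<omega>. exp (LINT s:{0..t}|lborel. f (X s \<omega>)) \<partial>P x)"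
    and "(\<integral>\<omega>. exp (LINT s:{0..t}|lborel. f (X s \<omega>)) \<partial>P x) \<le> exp (lam * t + K + a)"
proof -
  interpret prob_space "P x" using proc unfolding feller_markov_def by simp
  have sets_P: "sets (P x) = sets A" using proc unfolding feller_markov_def by simp
  have space_P: "space (P x) = space A" by (rule sets_eq_imp_space_eq[OF sets_P])
  have joint: "(\<lambda>(\<omega>, s). X (max s 0) \<omega>) \<in> borel_measurable (A \<Otimes>\<^sub>M lborel)"
    using proc feller_markov_measurable[OF proc] unfolding feller_markov_def
    by (intro right_continuous_process_measurable) auto
  have integrable: "set_integrable lborel {0..t} (\<lambda>s. g (X s \<omega>))"
    if "g \<in> borel_measurable borel" "bounded (range g)" "\<omega> \<in> space A" for g :: "'e \<Rightarrow> real" and \<omega>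
    by (rule path_set_integrable[OF joint that])
  define I where "I \<omega> = (LINT s:{0..t}|lborel. f (X s \<omega>))" for \<omega>
  define Z where "Z \<omega> = (LINT s:{0..t}|lborel. f (X s \<omega>) - lam) + m (X t \<omega>)" for \<omega>
  have I_le: "I \<omega> \<le> 0" if "\<omega> \<in> space A" for \<omega>
  proof -
    have "I \<omega> \<le> (LINT s:{0..t}|lborel. (\<lambda>_. 0::real) (X s \<omega>))"
      unfolding I_def using f(3) integrable[OF f(1,2) that] integrable[of "\<lambda>_. 0", OF _ _ that]
      by (intro set_integral_mono) auto
    then show ?thesis by (simp add: set_lebesgue_integral_def)
  qed
  have Z_eq: "Z \<omega> = I \<omega> - lam * t + m (X t \<omega>)" if "\<omega> \<in> space A" for \<omega>
  proof -
    have "(LINT s:{0..t}|lborel. f (X s \<omega>) - lam) = I \<omega> - (LINT s:{0..t}|lborel. lam)"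
      unfolding I_def using integrable[OF f(1,2) that] integrable[of "\<lambda>_. lam", OF _ _ that]
      by (intro set_integral_diff(2)) auto
    also have "(LINT s:{0..t}|lborel. lam) = lam * t" using t by (simp add: set_integral_const)
    finally show ?thesis unfolding Z_def by simp
  qed
  have "I \<in> borel_measurable A"
    unfolding I_def by (rule time_integral_measurable[OF joint f(1)])
  moreover have "Z \<in> borel_measurable A"
    unfolding Z_def using f(1)
    by (intro borel_measurable_add time_integral_measurable[OF joint, where g="\<lambda>y. f y - lam", simplified]
        measurable_compose[OF feller_markov_measurable[OF proc] m(1)]) (use t in auto)
  ultimately have meas: "I \<in> borel_measurable (P x)" "Z \<in> borel_measurable (P x)"
    by (simp_all add: measurable_cong_sets[OF sets_P refl])
  have "(\<integral>\<omega>. exp (I \<omega>) \<partial>P x) \<le> exp ((lam * t + K) + a)"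
  proof (rule integral_exp_le[OF meas(1) _ meas(2) _ value_le[folded Z_def]])
    fix \<omega> assume "\<omega> \<in> space (P x)"
    then have \<omega>: "\<omega> \<in> space A" by (simp add: space_P)
    show "I \<omega> \<le> Z \<omega> + (lam * t + K)" "Z \<omega> \<le> - lam * t + B"
      using Z_eq[OF \<omega>] I_le[OF \<omega>] m(2,3)[of "X t \<omega>"] by auto
  qed
  then show "(\<integral>\<omega>. exp (LINT s:{0..t}|lborel. f (X s \<omega>)) \<partial>P x) \<le> exp (lam * t + K + a)"
    unfolding I_def by simp
  show "0 < (\<integral>\<omega>. exp (LINT s:{0..t}|lborel. f (X s \<omega>)) \<partial>P x)"
    using I_le unfolding I_def[symmetric]
    by (intro integral_pos integrable_exp_bounded_above[OF meas(1)]) (auto simp: space_P)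
qed

lemma growth_quot_le:
  assumes "0 < t"
    and "\<And>x. 0 < (\<integral>\<omega>. exp (LINT s:{0..t}|lborel. g (X s \<omega>)) \<partial>P x)"
    and "\<And>x. (\<integral>\<omega>. exp (LINT s:{0..t}|lborel. g (X s \<omega>)) \<partial>P x) \<le> exp b"
  shows "growth_quot P X g t \<le> b / t"
proof -
  have bdd: "bdd_above (range (\<lambda>x. \<integral>\<omega>. exp (LINT s:{0..t}|lborel. g (X s \<omega>)) \<partial>P x))"
    using assms(3) by (intro bdd_aboveI2)
  have "ln (SUP x. \<integral>\<omega>. exp (LINT s:{0..t}|lborel. g (X s \<omega>)) \<partial>P x) \<le> ln (exp b)"
    using assms(2)[of undefined] cSUP_upper[OF UNIV_I bdd, of undefined] assms(3)
    by (intro ln_mono cSUP_least) auto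
  then show ?thesis
    unfolding growth_quot_def using assms(1) by (simp add: divide_right_mono)
qed

lemma Lim_at_top_le_of_le_plus_div:
  fixes g :: "real \<Rightarrow> real"
  assumes "(g \<longlongrightarrow> L) at_top" "\<forall>\<^sub>F t in at_top. g t \<le> lam + D / t"
  shows "Lim at_top g \<le> lam"
proof -
  have "((\<lambda>t. lam + D / t) \<longlongrightarrow> lam + 0) at_top"
    by (intro tendsto_add tendsto_const tendsto_divide_0[OF tendsto_const]
        filterlim_at_top_imp_at_infinity filterlim_ident)
  then have "L \<le> lam" using tendsto_le[OF _ _ assms] by simp
  then show ?thesis using tendsto_Lim[OF _ assms(1)] by simp
qed

theorem lemma2p1:
  fixes A :: "'w measure" and F :: "real \<Rightarrow> 'w measure"
    and P :: "'e::{metric_space,second_countable_topology} \<Rightarrow> 'w measure"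
    and X :: "real \<Rightarrow> 'w \<Rightarrow> 'e"
    and U :: "'e set" and f :: "'e \<Rightarrow> real" and c :: "'e \<Rightarrow> 'e \<Rightarrow> real"
    and w :: "'e \<Rightarrow> real" and lam :: real
  assumes E_lc: "locally_compact_space (euclidean :: 'e topology)"
    and proc: "feller_markov A F P X"
    and U: "compact U" "U \<noteq> {}"
    and f: "continuous_on UNIV f" "bounded (range f)" "\<forall>x. f x \<le> 0"
    and c: "continuous_on (UNIV \<times> U) (\<lambda>(x, \<xi>). c x \<xi>)" "bounded ((\<lambda>(x, \<xi>). c x \<xi>) ` (UNIV \<times> U))"
           "\<forall>x. \<forall>\<xi>\<in>U. c x \<xi> \<le> 0"
    and r_exists: "\<exists>L. (growth_quot P X f \<longlongrightarrow> L) at_top"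
    and w: "continuous_on UNIV w" "bounded (range w)"
    and bellman: "\<forall>x. ereal (w x) =
        (SUP \<tau>\<in>bdd_stopping_times A F (P x).
           ereal (ln (\<integral>\<omega>. exp ((LINT s:{0..\<tau> \<omega>}|lborel. f (X s \<omega>) - lam)
                               + Mop c U w (X (\<tau> \<omega>) \<omega>)) \<partial>P x)))"
  shows "lam \<ge> rate P X f"
proof -
  obtain Bc where Bc: "\<And>x \<xi>. \<xi> \<in> U \<Longrightarrow> \<bar>c x \<xi>\<bar> \<le> Bc" using c(2) unfolding bounded_iff by force
  obtain Bw where Bw: "\<And>x. \<bar>w x\<bar> \<le> Bw" using w(2) unfolding bounded_iff by auto
  have c_w_le: "c x \<xi> + w \<xi> \<le> Bw" if "\<xi> \<in> U" for x \<xi>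
    using c(3) that abs_le_D1[OF Bw[of \<xi>]] by (metis add_decreasing)
  then have bdd: "bdd_above ((\<lambda>\<xi>. c x \<xi> + w \<xi>) ` U)" for x
    by (intro bdd_aboveI2)
  obtain \<xi>\<^sub>0 where \<xi>\<^sub>0: "\<xi>\<^sub>0 \<in> U" using U(2) by blast
  have M_ge: "- (Bc + Bw) \<le> Mop c U w y" for y
    using cSUP_upper[OF \<xi>\<^sub>0 bdd, of y] Bc[OF \<xi>\<^sub>0, of y] Bw[of \<xi>\<^sub>0] unfolding Mop_def by linarith
  have M_le: "Mop c U w y \<le> Bw" for y
    unfolding Mop_def using c_w_le by (intro cSUP_least[OF U(2)])
  have value_le: "ln (\<integral>\<omega>. exp ((LINT s:{0..t}|lborel. f (X s \<omega>) - lam) + Mop c U w (X t \<omega>)) \<partial>P x) \<le> Bw"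
    (is "?v \<le> _") if "0 \<le> t" for t x
  proof -
    have "(\<lambda>_. t) \<in> bdd_stopping_times A F (P x)"
      unfolding bdd_stopping_times_def using that by (auto intro!: stopping_time_const)
    then have "ereal ?v \<le> ereal (w x)"
      unfolding bellman[rule_format, of x] by (rule SUP_upper2) simp
    then show ?thesis using abs_le_D1[OF Bw[of x]] by simp
  qed
  have "growth_quot P X f t \<le> lam + (Bc + Bw + Bw) / t" if t: "0 < t" for t
  proof -
    note expectation_exp_time_integral_le[OF proc borel_measurable_continuous_onI[OF f(1)] f(2) _
        Mop_measurable[OF c(1) U(2) w(1) bdd] M_le M_ge t value_le[OF less_imp_le[OF t]]]
    then have "growth_quot P X f t \<le> (lam * t + (Bc + Bw) + Bw) / t"
      using f(3) t by (intro growth_quot_le) auto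
    also have "\<dots> = lam + (Bc + Bw + Bw) / t" using t by (simp add: field_simps)
    finally show ?thesis .
  qed
  moreover obtain L where "(growth_quot P X f \<longlongrightarrow> L) at_top" using r_exists by blast
  ultimately show ?thesis
    unfolding rate_def
    by (intro Lim_at_top_le_of_le_plus_div[where D="Bc + Bw + Bw"] eventually_at_top_linorderI[of 1]) auto
qed

end
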